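(* Let $G$ be the two-dimensional $m\times n$ grid graph (the Cartesian product of a path on $m$ nodes and a path on $n$ nodes) with $m,n\ge 2$ and $mn>4$. Then $G$ does not have real sign rank $2$ (indeed there is no $\mathbf{Z}\in\mathbb{R}^{mn\times 2}$ with $\operatorname{sign}(A_{ij})=\operatorname{sign}((\mathbf{Z}\mathbf{Z}^\top)_{ij})$ for all $i\neq j$, where $\mathbf{A}$ is the adjacency matrix of $G$).
   Context: $\operatorname{sign}:\mathbb{R}\to\{+,-\}$ takes the value $-$ on $(-\infty,0]$ and $+$ on $(0,\infty)$. Diagonal entries of adjacency matrices are ignored. The real sign rank of a graph with adjacency $\mathbf{A}\in\{0,1\}^{N\times N}$ is the minimal $f$ such that there exists $\mathbf{Z}\in\mathbb{R}^{N\times f}$ with $\operatorname{sign}(A_{ij})=\operatorname{sign}((\mathbf{Z}\mathbf{Z}^\top)_{ij})$ for all $i\neq j$. *)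

theory Defs
  imports "HOL-Analysis.Analysis"
begin

definition sgn_pos :: "real \<Rightarrow> bool" where
  "sgn_pos x \<longleftrightarrow> x > 0"

text \<open>A sign representation of dimension f: Z : V \<Rightarrow> (coordinate index < f \<Rightarrow> real),
  (Z Z^T)_{uv} = sum over k<f of Z u k * Z v k, signs agree off the diagonal.\<close>
definition sign_rep :: "'v set \<Rightarrow> ('v \<Rightarrow> 'v \<Rightarrow> bool) \<Rightarrow> nat \<Rightarrow> ('v \<Rightarrow> nat \<Rightarrow> real) \<Rightarrow> bool" where
  "sign_rep V adj f Z \<longleftrightarrow>
     (\<forall>u\<in>V. \<forall>v\<in>V. u \<noteq> v \<longrightarrow>
        (sgn_pos (if adj u v then 1 else 0) \<longleftrightarrow> sgn_pos (\<Sum>k<f. Z u k * Z v k)))"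

definition real_sign_rank :: "'v set \<Rightarrow> ('v \<Rightarrow> 'v \<Rightarrow> bool) \<Rightarrow> nat" where
  "real_sign_rank V adj = (LEAST f. \<exists>Z. sign_rep V adj f Z)"

definition grid_vertices :: "nat \<Rightarrow> nat \<Rightarrow> (nat \<times> nat) set" where
  "grid_vertices m n = {0..<m} \<times> {0..<n}"

definition grid_adj :: "nat \<times> nat \<Rightarrow> nat \<times> nat \<Rightarrow> bool" where
  "grid_adj p q \<longleftrightarrow>
     (fst p = fst q \<and> (snd p = snd q + 1 \<or> snd q = snd p + 1)) \<or>
     (snd p = snd q \<and> (fst p = fst q + 1 \<or> fst q = fst p + 1))"

end

theory Submission
  imports Defs
begin

text \<open>A sign representation in the plane forbids an induced claw: if the centre \<open>c\<close> has positive
  inner product with three leaves \<open>x, y, z\<close>, write each leaf in the orthogonal frame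
  \<open>(c, c\<^sup>\<perp>)\<close>. Their first coordinates are positive, so pairwise non-positive inner products
  force the second coordinates to have pairwise opposite signs, which three reals cannot do.
  Every grid with \<open>m, n \<ge> 2\<close> and \<open>m n > 4\<close> has a vertex of degree three on its boundary, the
  centre of an induced claw. Sign rank 2 is ruled out as well, because every finite graph has a
  sign representation and the rank is therefore attained.\<close>

lemma no_three_pairwise_opposite_signs:
  fixes a b c :: real
  assumes "a * b < 0" "a * c < 0" "b * c < 0"
  shows False
  using assms by (auto simp: mult_less_0_iff)

lemma plane_inner_cross_identity:
  fixes c x y :: "real \<times> real"
  shows "(c \<bullet> x) * (c \<bullet> y)
           + (fst c * snd x - snd c * fst x) * (fst c * snd y - snd c * fst y)
         = (c \<bullet> c) * (x \<bullet> y)"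
  by (cases c; cases x; cases y) (simp add: algebra_simps)

lemma plane_no_claw:
  fixes c x y z :: "real \<times> real"
  assumes "c \<bullet> x > 0" "c \<bullet> y > 0" "c \<bullet> z > 0"
    and "x \<bullet> y \<le> 0" "x \<bullet> z \<le> 0" "y \<bullet> z \<le> 0"
  shows False
proof -
  define perp where "perp v = fst c * snd v - snd c * fst v" for v :: "real \<times> real"
  have perp_neg: "perp v * perp w < 0"
    if "c \<bullet> v > 0" "c \<bullet> w > 0" "v \<bullet> w \<le> 0" for v w
  proof -
    have "(c \<bullet> c) * (v \<bullet> w) \<le> 0"
      using that(3) by (simp add: mult_nonneg_nonpos)
    moreover have "(c \<bullet> v) * (c \<bullet> w) > 0"
      using that(1,2) by simp
    ultimately show ?thesis
      using plane_inner_cross_identity[of c v w] unfolding perp_def by linarith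
  qed
  show False
    using no_three_pairwise_opposite_signs perp_neg assms by blast
qed

definition induced_claw :: "'v set \<Rightarrow> ('v \<Rightarrow> 'v \<Rightarrow> bool) \<Rightarrow> 'v \<Rightarrow> 'v \<Rightarrow> 'v \<Rightarrow> 'v \<Rightarrow> bool" where
  "induced_claw V adj c x y z \<longleftrightarrow>
     {c, x, y, z} \<subseteq> V \<and> distinct [c, x, y, z] \<and>
     adj c x \<and> adj c y \<and> adj c z \<and> \<not> adj x y \<and> \<not> adj x z \<and> \<not> adj y z"

lemma sign_rep_adj_iff:
  assumes "sign_rep V adj f Z" "u \<in> V" "v \<in> V" "u \<noteq> v"
  shows "adj u v \<longleftrightarrow> (\<Sum>k<f. Z u k * Z v k) > 0"
proof -
  have "(0 < (if adj u v then 1 else 0 :: real)) \<longleftrightarrow> (0 < (\<Sum>k<f. Z u k * Z v k))"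
    using assms unfolding sign_rep_def sgn_pos_def by blast
  then show ?thesis
    by (cases "adj u v") auto
qed

lemma sign_rep_2_no_induced_claw:
  assumes "sign_rep V adj 2 Z"
  shows "\<not> induced_claw V adj c x y z"
proof
  assume claw: "induced_claw V adj c x y z"
  define vec where "vec u = (Z u 0, Z u 1)" for u
  have adj_iff: "adj u v \<longleftrightarrow> vec u \<bullet> vec v > 0" if "u \<in> V" "v \<in> V" "u \<noteq> v" for u v
    using sign_rep_adj_iff[OF assms that]
    by (simp add: vec_def numeral_2_eq_2)
  show False
    by (rule plane_no_claw[of "vec c" "vec x" "vec y" "vec z"])
      (use claw in \<open>auto simp: induced_claw_def adj_iff not_less[symmetric]\<close>)
qed

lemma sum_pos_iff_ex_nonzero:
  fixes f :: "'a \<Rightarrow> 'b::ordered_comm_monoid_add"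
  assumes "finite A" "\<And>x. x \<in> A \<Longrightarrow> 0 \<le> f x"
  shows "0 < sum f A \<longleftrightarrow> (\<exists>x\<in>A. f x \<noteq> 0)"
  using assms by (auto simp: less_le sum_nonneg sum_nonneg_eq_0_iff)

lemma sign_rep_exists:
  assumes "finite V" and sym: "\<And>u v. adj u v \<Longrightarrow> adj v u"
  shows "\<exists>f Z. sign_rep V adj f Z"
proof -
  obtain e where e: "bij_betw e {..<card (V \<times> V)} (V \<times> V)"
    using ex_bij_betw_nat_finite[of "V \<times> V"] assms(1) by (auto simp: lessThan_atLeast0)
  define Z where "Z u k = (if adj (fst (e k)) (snd (e k)) \<and> u \<in> {fst (e k), snd (e k)}
                           then 1 else 0 :: real)" for u k
  have "sign_rep V adj (card (V \<times> V)) Z"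
    unfolding sign_rep_def sgn_pos_def
  proof (intro ballI impI)
    fix u v assume uv: "u \<in> V" "v \<in> V" "u \<noteq> v"
    have edge_term: "Z u k * Z v k \<noteq> 0 \<longleftrightarrow> adj (fst (e k)) (snd (e k)) \<and> e k \<in> {(u, v), (v, u)}"
      for k using uv(3) by (cases "e k") (auto simp: Z_def)
    have nonneg: "0 \<le> Z u k * Z v k" for k
      by (simp add: Z_def)
    have "(\<Sum>k<card (V \<times> V). Z u k * Z v k) > 0 \<longleftrightarrow>
          (\<exists>k<card (V \<times> V). Z u k * Z v k \<noteq> 0)"
      using sum_pos_iff_ex_nonzero[of "{..<card (V \<times> V)}" "\<lambda>k. Z u k * Z v k"] nonneg
      by (auto simp del: mult_eq_0_iff)
    also have "\<dots> \<longleftrightarrow> adj u v"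
    proof
      assume "adj u v"
      have "(u, v) \<in> e ` {..<card (V \<times> V)}"
        using bij_betw_imp_surj_on[OF e] uv(1,2) by simp
      then obtain k where "k < card (V \<times> V)" "e k = (u, v)"
        by auto
      with \<open>adj u v\<close> show "\<exists>k<card (V \<times> V). Z u k * Z v k \<noteq> 0"
        unfolding edge_term by auto
    next
      assume "\<exists>k<card (V \<times> V). Z u k * Z v k \<noteq> 0"
      then obtain k where "adj (fst (e k)) (snd (e k))" "e k \<in> {(u, v), (v, u)}"
        unfolding edge_term by blast
      then have "adj u v \<or> adj v u"
        by auto
      then show "adj u v"
        using sym by blast
    qed
    finally show "(0 < (if adj u v then 1 else 0 :: real)) \<longleftrightarrow> (0 < (\<Sum>k<card (V \<times> V). Z u k * Z v k))"
      by simp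
  qed
  then show ?thesis by blast
qed

lemma sign_rep_real_sign_rank:
  assumes "finite V" "\<And>u v. adj u v \<Longrightarrow> adj v u"
  shows "\<exists>Z. sign_rep V adj (real_sign_rank V adj) Z"
  using sign_rep_exists[OF assms] unfolding real_sign_rank_def by (rule LeastI_ex)

lemma grid_adj_sym: "grid_adj p q \<Longrightarrow> grid_adj q p"
  by (auto simp: grid_adj_def)

lemma grid_induced_claw_row:
  assumes "2 \<le> m" "3 \<le> n"
  shows "induced_claw (grid_vertices m n) grid_adj (0, 1) (0, 0) (0, 2) (1, 1)"
  using assms by (auto simp: induced_claw_def grid_vertices_def grid_adj_def)

lemma grid_induced_claw_column:
  assumes "3 \<le> m" "2 \<le> n"
  shows "induced_claw (grid_vertices m n) grid_adj (1, 0) (0, 0) (2, 0) (1, 1)"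
  using assms by (auto simp: induced_claw_def grid_vertices_def grid_adj_def)

theorem theorem2:
  fixes m n :: nat
  assumes "m \<ge> 2" and "n \<ge> 2" and "m * n > 4"
  shows "real_sign_rank (grid_vertices m n) grid_adj \<noteq> 2
       \<and> \<not> (\<exists>Z. sign_rep (grid_vertices m n) grid_adj 2 Z)"
proof -
  have "m \<ge> 3 \<or> n \<ge> 3"
    using assms by (cases "m = 2"; cases "n = 2") auto
  then have no_rep: "\<not> (\<exists>Z. sign_rep (grid_vertices m n) grid_adj 2 Z)"
    using sign_rep_2_no_induced_claw grid_induced_claw_row grid_induced_claw_column assms
    by metis
  have "\<exists>Z. sign_rep (grid_vertices m n) grid_adj (real_sign_rank (grid_vertices m n) grid_adj) Z"
    by (rule sign_rep_real_sign_rank) (auto simp: grid_vertices_def grid_adj_sym)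
  with no_rep show ?thesis
    by metis
qed

end
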